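(* Fix $n\ge2$ and $B>0$. Let $\pi_0$ be any prior distribution on $\Theta(B)$; draw $(\tau,\mu_{\mathrm{L}},\mu_{\mathrm{R}})\sim\pi_0$ and then $\boldsymbol{X}\sim P(n,\tau,\mu_{\mathrm{L}},\mu_{\mathrm{R}})$, and define $Y=\mathbb{1}\{\mu_{\mathrm{L}}\ne\mu_{\mathrm{R}}\}$. For $\lambda=B\sqrt{n}/2$, the classifier $h^{\mathrm{CUSUM}}_\lambda(\boldsymbol{x})=\mathbb{1}\{\|\mathcal{C}(\boldsymbol{x})\|_\infty>\lambda\}$ satisfies $\mathbb{P}(h^{\mathrm{CUSUM}}_\lambda(\boldsymbol{X})\ne Y)\le n e^{-nB^2/8}$.
   Context: $P(n,\tau,\mu_{\mathrm{L}},\mu_{\mathrm{R}})$ is the law of $N_n(\boldsymbol{\mu},I_n)$ with $\mu_i=\mu_{\mathrm{L}}\mathbb{1}\{i\le\tau\}+\mu_{\mathrm{R}}\mathbb{1}\{i>\tau\}$. $\Theta(B)=\{(\tau,\mu_{\mathrm{L}},\mu_{\mathrm{R}})\in[n-1]\times\mathbb{R}\times\mathbb{R}: |\mu_{\mathrm{L}}-\mu_{\mathrm{R}}|\sqrt{\tau(n-\tau)}/n\in\{0\}\cup(B,\infty)\}$. For $i\in[n-1]$, $\boldsymbol{v}_i=\bigl(\sqrt{\tfrac{n-i}{in}}\boldsymbol{1}_i^\top,-\sqrt{\tfrac{i}{(n-i)n}}\boldsymbol{1}_{n-i}^\top\bigr)^\top$ and $\mathcal{C}(\boldsymbol{x})=(\boldsymbol{v}_1^\top\boldsymbol{x},\ldots,\boldsymbol{v}_{n-1}^\top\boldsymbol{x})^\top$.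 *)

theory Defs
  imports "HOL-Probability.Probability"
begin

definition cp_mean :: "nat \<Rightarrow> real \<Rightarrow> real \<Rightarrow> nat \<Rightarrow> real" where
  "cp_mean \<tau> muL muR i = (if i \<le> \<tau> then muL else muR)"

definition cpP :: "nat \<Rightarrow> nat \<Rightarrow> real \<Rightarrow> real \<Rightarrow> (nat \<Rightarrow> real) measure" where
  "cpP n \<tau> muL muR =
     PiM {1..n} (\<lambda>i. density lborel (normal_density (cp_mean \<tau> muL muR i) 1))"

definition Theta :: "nat \<Rightarrow> real \<Rightarrow> (nat \<times> real \<times> real) set" where
  "Theta n B = {(\<tau>, muL, muR). \<tau> \<in> {1..n-1} \<and>
     (let s = \<bar>muL - muR\<bar> * sqrt (real \<tau> * real (n - \<tau>)) / real n in s = 0 \<or> s > B)}"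

definition cusum_vec :: "nat \<Rightarrow> nat \<Rightarrow> nat \<Rightarrow> real" where
  "cusum_vec n i j = (if j \<le> i then sqrt (real (n - i) / (real i * real n))
                      else - sqrt (real i / (real (n - i) * real n)))"

definition cusum :: "nat \<Rightarrow> (nat \<Rightarrow> real) \<Rightarrow> nat \<Rightarrow> real" where
  "cusum n x i = (\<Sum>j = 1..n. cusum_vec n i j * x j)"

definition cusum_supnorm :: "nat \<Rightarrow> (nat \<Rightarrow> real) \<Rightarrow> real" where
  "cusum_supnorm n x = Max ((\<lambda>i. \<bar>cusum n x i\<bar>) ` {1..n-1})"

definition h_cusum :: "nat \<Rightarrow> real \<Rightarrow> (nat \<Rightarrow> real) \<Rightarrow> bool" where
  "h_cusum n lam x = (cusum_supnorm n x > lam)"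

end

theory Submission
  imports Defs
begin

(* Each CUSUM coordinate v_i' X is Gaussian with variance |v_i|^2 = 1 and mean v_i' mu.
   Without a change, mu is constant and v_i is orthogonal to constants, so a false alarm needs
   one of n - 1 standard normals to exceed lambda in absolute value.  With a change at tau,
   v_tau' mu = (mu_L - mu_R) sqrt(tau (n - tau) / n) is sqrt n times the signal strength
   |mu_L - mu_R| sqrt(tau (n - tau)) / n > B, so it exceeds 2 lambda in modulus, and missing
   the change needs v_tau' X to deviate from its mean by more than lambda.  Both events are
   controlled by the tail bound P(|Z| > t) <= exp(-t^2/2), and exp(-lambda^2/2) = exp(-n B^2/8). *)

lemma std_normal_density_le_shifted:
  fixes t x :: real
  assumes "0 \<le> t" "t \<le> x"
  shows "std_normal_density x \<le> exp (- t\<^sup>2 / 2) * std_normal_density (x - t)"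
proof -
  have "- x\<^sup>2 / 2 \<le> - t\<^sup>2 / 2 + - (x - t)\<^sup>2 / 2"
    using assms by (simp add: power2_eq_square algebra_simps mult_left_mono)
  then have "exp (- x\<^sup>2 / 2) \<le> exp (- t\<^sup>2 / 2) * exp (- (x - t)\<^sup>2 / 2)"
    by (simp flip: exp_add)
  then show ?thesis
    by (simp add: std_normal_density_def divide_right_mono)
qed

lemma std_normal_positive_half:
  "(\<integral>\<^sup>+x\<in>{0<..}. std_normal_density x \<partial>lborel) \<le> 1 / 2"
proof -
  let ?I = "\<lambda>A. \<integral>\<^sup>+x. ennreal (std_normal_density x) * indicator A x \<partial>lborel"
  have reflect: "?I {0<..} = ?I {..<0}"
    by (subst nn_integral_real_affine[where c = "-1" and t = 0])
       (auto simp: std_normal_density_def indicator_def intro!: nn_integral_cong)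
  have "?I {0<..} + ?I {..<0} \<le> (\<integral>\<^sup>+x. ennreal (std_normal_density x) \<partial>lborel)"
    by (subst nn_integral_add[symmetric])
       (auto intro!: nn_integral_mono simp: indicator_def)
  also have "\<dots> = 1"
    using prob_space.emeasure_space_1[OF prob_space_normal_density[of 1 0]]
    by (simp add: emeasure_density)
  finally have "2 * ?I {0<..} \<le> 1"
    by (simp add: reflect mult_2)
  then have "?I {0<..} * 2 / 2 \<le> 1 / 2"
    by (simp only: mult.commute[of _ 2] divide_right_mono_ennreal)
  then show ?thesis
    by (subst (asm) ennreal_mult_divide_eq) simp_all
qed

lemma (in prob_space) std_normal_upper_tail:
  assumes Z: "distributed M lborel Z std_normal_density" and t: "0 \<le> t"
  shows "emeasure M {x \<in> space M. t < Z x} \<le> exp (- t\<^sup>2 / 2) / 2"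
proof -
  have shift: "(\<integral>\<^sup>+x\<in>{t<..}. std_normal_density (x - t) \<partial>lborel)
      = (\<integral>\<^sup>+x\<in>{0<..}. std_normal_density x \<partial>lborel)"
    by (subst nn_integral_real_affine[where c = 1 and t = t]) (auto simp: indicator_def)
  have "emeasure M {x \<in> space M. t < Z x} = (\<integral>\<^sup>+x\<in>{t<..}. std_normal_density x \<partial>lborel)"
    using distributed_emeasure[OF Z, of "{t<..}"] by (simp add: vimage_def Int_def conj_commute)
  also have "\<dots> \<le> (\<integral>\<^sup>+x\<in>{t<..}. exp (- t\<^sup>2 / 2) * std_normal_density (x - t) \<partial>lborel)"
    using std_normal_density_le_shifted[OF t]
    by (intro nn_integral_mono) (auto simp: indicator_def intro: ennreal_leI)
  also have "\<dots> = exp (- t\<^sup>2 / 2) * (\<integral>\<^sup>+x\<in>{0<..}. std_normal_density x \<partial>lborel)"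
    by (simp add: ennreal_mult nn_integral_cmult mult.assoc flip: shift)
  also have "\<dots> \<le> ennreal (exp (- t\<^sup>2 / 2)) * (1 / 2)"
    by (intro mult_left_mono std_normal_positive_half) simp
  also have "\<dots> = exp (- t\<^sup>2 / 2) / 2"
    by (simp add: ennreal_times_divide ennreal_divide_numeral)
  finally show ?thesis .
qed

lemma (in prob_space) normal_deviation_le:
  assumes Y: "distributed M lborel Y (normal_density \<mu> 1)" and t: "0 \<le> t"
  shows "emeasure M {x \<in> space M. t < \<bar>Y x - \<mu>\<bar>} \<le> exp (- t\<^sup>2 / 2)"
proof -
  have tail: "emeasure M {x \<in> space M. t < s * (Y x - \<mu>)} \<le> exp (- t\<^sup>2 / 2) / 2"
    if "\<bar>s\<bar> = 1" for s :: real
  proof (rule std_normal_upper_tail[OF _ t])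
    show "distributed M lborel (\<lambda>x. s * (Y x - \<mu>)) std_normal_density"
      using normal_density_affine[OF Y, of s "- s * \<mu>"] that by (simp add: algebra_simps)
  qed
  have [measurable]: "Y \<in> borel_measurable M"
    using distributed_measurable[OF Y] by simp
  have "emeasure M {x \<in> space M. t < \<bar>Y x - \<mu>\<bar>}
      \<le> emeasure M ({x \<in> space M. t < 1 * (Y x - \<mu>)} \<union> {x \<in> space M. t < -1 * (Y x - \<mu>)})"
    by (intro emeasure_mono) auto
  also have "\<dots> \<le> emeasure M {x \<in> space M. t < 1 * (Y x - \<mu>)} + emeasure M {x \<in> space M. t < -1 * (Y x - \<mu>)}"
    by (intro emeasure_subadditive) measurable
  also have "\<dots> \<le> ennreal (exp (- t\<^sup>2 / 2) / 2) + ennreal (exp (- t\<^sup>2 / 2) / 2)"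
    by (intro add_mono tail) simp_all
  finally show ?thesis
    by (simp flip: ennreal_plus)
qed

lemma indep_vars_PiM_components:
  assumes "I \<noteq> {}" and M: "\<And>j. j \<in> I \<Longrightarrow> prob_space (M j)"
  shows "prob_space.indep_vars (PiM I M) M (\<lambda>j x. x j) I"
proof -
  interpret prob_space "PiM I M" by (rule prob_space_PiM) (rule M)
  have "distr (PiM I M) (PiM I M) (\<lambda>x. \<lambda>j\<in>I. x j) = distr (PiM I M) (PiM I M) (\<lambda>x. x)"
    by (rule distr_cong) (auto simp: space_PiM PiE_def extensional_restrict)
  also have "\<dots> = PiM I M"
    by (rule distr_id2) simp
  also have "\<dots> = PiM I (\<lambda>j. distr (PiM I M) (M j) (\<lambda>x. x j))"
    by (rule PiM_cong) (simp_all add: distr_PiM_component M)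
  finally show ?thesis
    by (subst indep_vars_iff_distr_eq_PiM'[OF \<open>I \<noteq> {}\<close>]) simp_all
qed

lemma distributed_PiM_component:
  assumes "j \<in> I" and [measurable]: "f j \<in> borel_measurable borel"
    and prob: "\<And>j. j \<in> I \<Longrightarrow> prob_space (density lborel (f j))"
  shows "distributed (PiM I (\<lambda>j. density lborel (f j))) lborel (\<lambda>x. x j) (f j)"
proof -
  let ?M = "PiM I (\<lambda>j. density lborel (f j))"
  have "distr ?M lborel (\<lambda>x. x j) = distr ?M (density lborel (f j)) (\<lambda>x. x j)"
    by (rule distr_cong) simp_all
  also have "\<dots> = density lborel (f j)"
    by (rule distr_PiM_component[OF prob \<open>j \<in> I\<close>])
  finally show ?thesis
    using measurable_component_singleton[OF \<open>j \<in> I\<close>, of "\<lambda>j. density lborel (f j)"]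
    by (simp add: distributed_def measurable_cong_sets[OF refl sets_density])
qed

lemma distributed_linear_combination_PiM_normal:
  fixes \<mu> \<sigma> c :: "'i \<Rightarrow> real"
  assumes I: "finite I" "I \<noteq> {}" and \<sigma>: "\<And>j. j \<in> I \<Longrightarrow> 0 < \<sigma> j" and c: "\<And>j. j \<in> I \<Longrightarrow> c j \<noteq> 0"
  shows "distributed (PiM I (\<lambda>j. density lborel (normal_density (\<mu> j) (\<sigma> j)))) lborel
           (\<lambda>x. \<Sum>j\<in>I. c j * x j) (normal_density (\<Sum>j\<in>I. c j * \<mu> j) (sqrt (\<Sum>j\<in>I. (c j * \<sigma> j)\<^sup>2)))"
proof -
  let ?N = "\<lambda>j. density lborel (normal_density (\<mu> j) (\<sigma> j))"
  have prob: "\<And>j. j \<in> I \<Longrightarrow> prob_space (?N j)"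
    by (rule prob_space_normal_density) (rule \<sigma>)
  interpret prob_space "PiM I ?N" by (rule prob_space_PiM) (rule prob)
  have scaled: "distributed (PiM I ?N) lborel (\<lambda>x. c j * x j) (normal_density (c j * \<mu> j) (\<bar>c j\<bar> * \<sigma> j))"
    if "j \<in> I" for j
    using normal_density_affine[OF distributed_PiM_component[OF that], of "c j" 0] prob \<sigma> c that
    by simp
  have "indep_vars (\<lambda>_. borel) (\<lambda>j x. c j * x j) I"
    by (rule indep_vars_compose2[OF indep_vars_PiM_components[OF I(2) prob]])
       measurable
  then have "distributed (PiM I ?N) lborel (\<lambda>x. \<Sum>j\<in>I. c j * x j)
      (normal_density (\<Sum>j\<in>I. c j * \<mu> j) (sqrt (\<Sum>j\<in>I. (\<bar>c j\<bar> * \<sigma> j)\<^sup>2)))"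
    by (rule sum_indep_normal[OF I]) (use \<sigma> c scaled in auto)
  then show ?thesis
    by (simp add: power_mult_distrib)
qed

lemma sum_atLeastAtMost_if_le:
  assumes "i \<le> n"
  shows "(\<Sum>j = 1..n. if j \<le> i then u else v) = of_nat i * u + of_nat (n - i) * (v :: 'a :: comm_ring_1)"
proof -
  have "{1..n} \<inter> {j. j \<le> i} = {1..i}" "{1..n} \<inter> - {j. j \<le> i} = {i<..n}"
    using assms by auto
  then show ?thesis
    by (simp add: sum.If_cases)
qed

lemma mult_sqrt_divide_mult:
  fixes c x y :: real
  assumes "0 \<le> c"
  shows "c * sqrt (x / (c * y)) = sqrt (c * x / y)"
proof (cases "c = 0")
  case False
  have "c * sqrt (x / (c * y)) = sqrt (c\<^sup>2 * (x / (c * y)))"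
    using assms by (subst real_sqrt_mult) simp
  also have "c\<^sup>2 * (x / (c * y)) = c * x / y"
    using False by (simp add: power2_eq_square)
  finally show ?thesis .
qed simp

lemma sum_cusum_vec_squared:
  assumes "1 \<le> i" "i < n"
  shows "(\<Sum>j = 1..n. (cusum_vec n i j)\<^sup>2) = 1"
proof -
  have "(\<Sum>j = 1..n. (cusum_vec n i j)\<^sup>2)
      = real i * (real (n - i) / (real i * real n)) + real (n - i) * (real i / (real (n - i) * real n))"
    unfolding cusum_vec_def if_distrib[of "\<lambda>x. x\<^sup>2"] sum_atLeastAtMost_if_le[OF less_imp_le, OF \<open>i < n\<close>]
    by simp
  also have "\<dots> = 1"
    using assms by (simp add: field_simps)
  finally show ?thesis .
qed

lemma cusum_vec_inner_cp_mean:
  assumes "1 \<le> i" "i < n"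
  shows "(\<Sum>j = 1..n. cusum_vec n i j * cp_mean i a b j) = (a - b) * sqrt (real i * real (n - i) / real n)"
proof -
  have "(\<Sum>j = 1..n. cusum_vec n i j * cp_mean i a b j)
      = (\<Sum>j = 1..n. if j \<le> i then sqrt (real (n - i) / (real i * real n)) * a
                    else - sqrt (real i / (real (n - i) * real n)) * b)"
    by (intro sum.cong) (simp_all add: cusum_vec_def cp_mean_def)
  also have "\<dots> = real i * (sqrt (real (n - i) / (real i * real n)) * a)
                 + real (n - i) * (- sqrt (real i / (real (n - i) * real n)) * b)"
    by (rule sum_atLeastAtMost_if_le) (use assms in simp)
  also have "\<dots> = (a - b) * sqrt (real i * real (n - i) / real n)"
    using mult_sqrt_divide_mult[of "real i" "real (n - i)" "real n"]
      mult_sqrt_divide_mult[of "real (n - i)" "real i" "real n"]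
    by (simp add: algebra_simps)
  finally show ?thesis .
qed

lemma cusum_vec_inner_const:
  assumes "1 \<le> i" "i < n"
  shows "(\<Sum>j = 1..n. cusum_vec n i j * cp_mean \<tau> a a j) = 0"
  using cusum_vec_inner_cp_mean[OF assms, of a a] by (simp add: cp_mean_def)

lemma measurable_cusum [measurable]: "(\<lambda>x. cusum n x i) \<in> borel_measurable (cpP n \<tau> a b)"
  unfolding cusum_def cpP_def by measurable

lemma h_cusum_iff:
  assumes "2 \<le> n"
  shows "h_cusum n lam x \<longleftrightarrow> (\<exists>i \<in> {1..n-1}. lam < \<bar>cusum n x i\<bar>)"
  using assms unfolding h_cusum_def cusum_supnorm_def by (subst Max_gr_iff) auto

lemma prob_space_cpP: "prob_space (cpP n \<tau> a b)"
  unfolding cpP_def by (intro prob_space_PiM prob_space_normal_density) simp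

lemma cusum_distributed:
  assumes "1 \<le> i" "i < n"
  shows "distributed (cpP n \<tau> a b) lborel (\<lambda>x. cusum n x i)
           (normal_density (\<Sum>j = 1..n. cusum_vec n i j * cp_mean \<tau> a b j) 1)"
proof -
  have "cusum_vec n i j \<noteq> 0" for j
    using assms by (auto simp: cusum_vec_def)
  then show ?thesis
    using distributed_linear_combination_PiM_normal[of "{1..n}" "\<lambda>_. 1" "cusum_vec n i" "cp_mean \<tau> a b"]
      sum_cusum_vec_squared[OF assms] assms
    by (simp add: cpP_def cusum_def)
qed

lemma cusum_false_alarm_le:
  assumes "2 \<le> n" "0 \<le> lam"
  shows "emeasure (cpP n \<tau> a a) {x \<in> space (cpP n \<tau> a a). h_cusum n lam x}
           \<le> ennreal (real (n - 1) * exp (- lam\<^sup>2 / 2))"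
proof -
  let ?M = "cpP n \<tau> a a"
  interpret prob_space ?M by (rule prob_space_cpP)
  have "{x \<in> space ?M. h_cusum n lam x} = (\<Union>i \<in> {1..n-1}. {x \<in> space ?M. lam < \<bar>cusum n x i - 0\<bar>})"
    using h_cusum_iff[OF \<open>2 \<le> n\<close>] by auto
  also have "emeasure ?M \<dots> \<le> (\<Sum>i \<in> {1..n-1}. emeasure ?M {x \<in> space ?M. lam < \<bar>cusum n x i - 0\<bar>})"
    by (intro emeasure_subadditive_finite) auto
  also have "\<dots> \<le> (\<Sum>i \<in> {1..n-1}. ennreal (exp (- lam\<^sup>2 / 2)))"
  proof (intro sum_mono normal_deviation_le[OF _ \<open>0 \<le> lam\<close>])
    fix i assume "i \<in> {1..n-1}"
    then have "1 \<le> i" "i < n" using assms by auto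
    then show "distributed ?M lborel (\<lambda>x. cusum n x i) (normal_density 0 1)"
      using cusum_distributed[of i n \<tau> a a] cusum_vec_inner_const[of i n \<tau> a] by simp
  qed
  also have "\<dots> = ennreal (real (n - 1) * exp (- lam\<^sup>2 / 2))"
    using assms by (simp add: ennreal_of_nat_eq_real_of_nat ennreal_mult)
  finally show ?thesis .
qed

lemma cusum_missed_change_le:
  assumes "1 \<le> \<tau>" "\<tau> < n" "0 \<le> lam"
    and jump: "2 * lam < \<bar>a - b\<bar> * sqrt (real \<tau> * real (n - \<tau>) / real n)"
  shows "emeasure (cpP n \<tau> a b) {x \<in> space (cpP n \<tau> a b). \<not> h_cusum n lam x} \<le> exp (- lam\<^sup>2 / 2)"
proof -
  let ?M = "cpP n \<tau> a b"
  define m where "m = (a - b) * sqrt (real \<tau> * real (n - \<tau>) / real n)"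
  interpret prob_space ?M by (rule prob_space_cpP)
  have "\<bar>cusum n x \<tau>\<bar> \<le> lam \<Longrightarrow> lam < \<bar>cusum n x \<tau> - m\<bar>" for x
    using jump by (simp add: m_def abs_mult)
  moreover have "\<tau> \<in> {1..n-1}"
    using assms by simp
  ultimately have "{x \<in> space ?M. \<not> h_cusum n lam x} \<subseteq> {x \<in> space ?M. lam < \<bar>cusum n x \<tau> - m\<bar>}"
    using assms by (force simp: h_cusum_iff)
  then have "emeasure ?M {x \<in> space ?M. \<not> h_cusum n lam x} \<le> emeasure ?M {x \<in> space ?M. lam < \<bar>cusum n x \<tau> - m\<bar>}"
    by (intro emeasure_mono) measurable
  also have "\<dots> \<le> exp (- lam\<^sup>2 / 2)"
    using cusum_distributed[OF assms(1,2), of \<tau> a b] cusum_vec_inner_cp_mean[OF assms(1,2)]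
    by (intro normal_deviation_le \<open>0 \<le> lam\<close>) (simp add: m_def)
  finally show ?thesis .
qed

lemma cusum_misclassification_le:
  assumes n: "2 \<le> n" and "0 < B" and \<theta>: "(\<tau>, a, b) \<in> Theta n B"
  shows "emeasure (cpP n \<tau> a b) {x \<in> space (cpP n \<tau> a b). h_cusum n (B * sqrt (real n) / 2) x \<noteq> (a \<noteq> b)}
           \<le> real n * exp (- real n * B\<^sup>2 / 8)"
proof -
  define lam where "lam = B * sqrt (real n) / 2"
  have "0 \<le> lam" using \<open>0 < B\<close> by (simp add: lam_def)
  have exp_lam: "exp (- lam\<^sup>2 / 2) = exp (- real n * B\<^sup>2 / 8)"
    by (simp add: lam_def power_mult_distrib power_divide)
  have \<tau>: "1 \<le> \<tau>" "\<tau> < n"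
    using \<theta> n by (auto simp: Theta_def)
  show ?thesis
  proof (cases "a = b")
    case True
    have "emeasure (cpP n \<tau> a a) {x \<in> space (cpP n \<tau> a a). h_cusum n lam x}
        \<le> real (n - 1) * exp (- lam\<^sup>2 / 2)"
      by (rule cusum_false_alarm_le[OF n \<open>0 \<le> lam\<close>])
    also have "\<dots> \<le> real n * exp (- lam\<^sup>2 / 2)"
      by (intro ennreal_leI mult_right_mono) simp_all
    also have "\<dots> = real n * exp (- real n * B\<^sup>2 / 8)"
      by (simp only: exp_lam)
    finally show ?thesis
      using True by (simp add: lam_def)
  next
    case False
    have jump: "\<bar>a - b\<bar> * sqrt (real \<tau> * real (n - \<tau>)) / real n > B"
      using \<theta> False \<tau> by (auto simp: Theta_def Let_def)
    have "2 * lam < \<bar>a - b\<bar> * sqrt (real \<tau> * real (n - \<tau>)) / real n * sqrt (real n)"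
      using mult_strict_right_mono[OF jump, of "sqrt (real n)"] n by (simp add: lam_def)
    also have "\<dots> = \<bar>a - b\<bar> * sqrt (real \<tau> * real (n - \<tau>) / real n)"
      using n by (simp add: real_sqrt_divide field_simps)
    finally have "emeasure (cpP n \<tau> a b) {x \<in> space (cpP n \<tau> a b). \<not> h_cusum n lam x} \<le> exp (- lam\<^sup>2 / 2)"
      by (intro cusum_missed_change_le \<tau> \<open>0 \<le> lam\<close>)
    also have "\<dots> \<le> real n * exp (- lam\<^sup>2 / 2)"
      using n by (intro ennreal_leI) simp
    also have "\<dots> = real n * exp (- real n * B\<^sup>2 / 8)"
      by (simp only: exp_lam)
    finally show ?thesis
      using False by (simp add: lam_def)
  qed
qed

theorem corollary4p2:
  fixes n :: nat and B :: real and pi0 :: "(nat \<times> real \<times> real) measure"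
  assumes "n \<ge> 2" and "B > 0"
    and "prob_space pi0"
    and "sets pi0 = sets (count_space UNIV \<Otimes>\<^sub>M (borel \<Otimes>\<^sub>M borel))"
    and "AE \<theta> in pi0. \<theta> \<in> Theta n B"
  shows "(\<integral>\<^sup>+ \<theta>. emeasure (cpP n (fst \<theta>) (fst (snd \<theta>)) (snd (snd \<theta>)))
            {x \<in> space (cpP n (fst \<theta>) (fst (snd \<theta>)) (snd (snd \<theta>))).
               h_cusum n (B * sqrt (real n) / 2) x \<noteq> (fst (snd \<theta>) \<noteq> snd (snd \<theta>))} \<partial>pi0)
         \<le> ennreal (real n * exp (- real n * B^2 / 8))"
proof -
  interpret prob_space pi0 by fact
  let ?bound = "ennreal (real n * exp (- real n * B^2 / 8))"
  show ?thesis
    apply (rule order_trans[OF nn_integral_mono_AE[where v = "\<lambda>_. ?bound", OF eventually_mono[OF assms(5)]]])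
    subgoal for \<theta>
      using cusum_misclassification_le[OF assms(1,2), of "fst \<theta>" "fst (snd \<theta>)" "snd (snd \<theta>)"] by simp
    by (simp add: emeasure_space_1)
qed

end
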